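(* Let $S\subseteq\mathbb{Z}^2$. (a) If $S$ is connected, then $R(S)$ is connected or empty. (b) If $E$ is a connected subset of $R(S)$, then $S\cap Q(E)$ is connected.
   Context: The graph $\mathbf{G}$ on $\mathbb{Z}^2$ joins each point $p$ to $p\pm(1,0)$, $p\pm(0,1)$, $p+(-1,1)$, $p+(1,-1)$; a set is connected if it is connected in the subgraph of $\mathbf{G}$ it induces. For $p\in\mathbb{Z}^2$, $Q(p)=\{p,\ p+(1,0),\ p+(0,1)\}$, and $Q(E)=\bigcup_{a\in E}Q(a)$. $R(S)$ is the set of $p$ such that $S$ contains at least two points of $Q(p)$ (Toom's north-east-self majority rule applied to the configuration whose set of $1$'s is $S$). *)

theory Defs
  imports Main
begin

type_synonym pt = "int \<times> int"

definition adjG :: "pt \<Rightarrow> pt \<Rightarrow> bool" where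
  "adjG p q \<longleftrightarrow> (let d = (fst q - fst p, snd q - snd p) in
     d \<in> {(1,0), (-1,0), (0,1), (0,-1), (-1,1), (1,-1)})"

definition gconnected :: "pt set \<Rightarrow> bool" where
  "gconnected A \<longleftrightarrow> A \<noteq> {} \<and>
     (\<forall>x\<in>A. \<forall>y\<in>A. (x, y) \<in> {(p, q). p \<in> A \<and> q \<in> A \<and> adjG p q}\<^sup>*)"

definition Q :: "pt \<Rightarrow> pt set" where
  "Q p = {p, (fst p + 1, snd p), (fst p, snd p + 1)}"

definition QS :: "pt set \<Rightarrow> pt set" where
  "QS E = (\<Union>a\<in>E. Q a)"

definition R :: "pt set \<Rightarrow> pt set" where
  "R S = {p. card (S \<inter> Q p) \<ge> 2}"

end

theory Submission
  imports Defs
begin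

text \<open>Both parts are instances of one transfer principle: a set B is connected if every
  point of B is attached to some point of a connected set A, points of B attached to the same
  point of A are joined in B, and a path in B can follow every edge of A.
  For (a), attach x \<in> R S to the points of S in Q x: every edge a a' of S lies in a common
  triangle Q z, and z \<in> R S since Q z contains the two points a, a' of S.
  For (b), attach u \<in> S \<inter> QS E to the p \<in> E with u \<in> Q p: the points of a triangle are pairwise
  adjacent, and for adjacent p, q \<in> R S some point of S \<inter> Q p equals or is adjacent to some
  point of S \<inter> Q q, as each of the two triangles contains two points of S.\<close>

lemma adjG_iff: "adjG (a, b) (c, d) \<longleftrightarrow>
    (c, d) \<in> {(a+1, b), (a-1, b), (a, b+1), (a, b-1), (a-1, b+1), (a+1, b-1)}"
  unfolding adjG_def Let_def by (auto simp: algebra_simps)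

lemma adjG_irrefl: "adjG a b \<Longrightarrow> a \<noteq> b"
  by (cases a) (auto simp: adjG_iff)

lemma Q_eq: "Q (a, b) = {(a, b), (a+1, b), (a, b+1)}"
  unfolding Q_def by simp

lemma finite_Q: "finite (Q p)"
  unfolding Q_def by simp

lemma Q_points_eq_or_adjG: "u \<in> Q p \<Longrightarrow> v \<in> Q p \<Longrightarrow> u = v \<or> adjG u v"
  by (cases p) (auto simp: Q_eq adjG_iff)

lemma Q_common_point_eq_or_adjG: "u \<in> Q p \<Longrightarrow> u \<in> Q q \<Longrightarrow> p = q \<or> adjG p q"
  by (cases p, cases q) (auto simp: Q_eq adjG_iff)

lemma adjG_common_Q: "adjG u v \<Longrightarrow> \<exists>z. u \<in> Q z \<and> v \<in> Q z"
proof -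
  assume "adjG u v"
  then obtain a b where u: "u = (a, b)" and
    "v \<in> {(a+1, b), (a-1, b), (a, b+1), (a, b-1), (a-1, b+1), (a+1, b-1)}"
    by (cases u, cases v) (auto simp: adjG_iff)
  then have "\<exists>z\<in>{(a, b), (a-1, b), (a, b-1)}. u \<in> Q z \<and> v \<in> Q z"
    by (auto simp: Q_eq)
  then show ?thesis by blast
qed

lemma two_le_card_iff: "finite A \<Longrightarrow> 2 \<le> card A \<longleftrightarrow> (\<exists>x\<in>A. \<exists>y\<in>A. x \<noteq> y)"
  by (metis card_le_Suc0_iff_eq not_less_eq_eq numeral_2_eq_2)

lemma mem_R_iff: "p \<in> R S \<longleftrightarrow> (\<exists>u\<in>Q p. \<exists>v\<in>Q p. u \<in> S \<and> v \<in> S \<and> u \<noteq> v)"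
  unfolding R_def by (simp add: two_le_card_iff finite_Q) blast

lemma R_has_point: "p \<in> R S \<Longrightarrow> \<exists>u\<in>S. u \<in> Q p"
  by (auto simp: mem_R_iff)

lemma R_adjG_linked:
  assumes "p \<in> R S" "q \<in> R S" "adjG p q"
  shows "\<exists>u\<in>Q p. \<exists>w\<in>Q q. u \<in> S \<and> w \<in> S \<and> (u = w \<or> adjG u w)"
proof -
  obtain a b c d where "p = (a, b)" "q = (c, d)" by fastforce
  with assms show ?thesis
    by (simp add: mem_R_iff Q_eq adjG_iff) (elim disjE conjE; simp; blast)
qed

definition gedges :: "pt set \<Rightarrow> pt rel" where
  "gedges A = {(p, q). p \<in> A \<and> q \<in> A \<and> adjG p q}"

lemma gconnected_iff: "gconnected A \<longleftrightarrow> A \<noteq> {} \<and> (\<forall>x\<in>A. \<forall>y\<in>A. (x, y) \<in> (gedges A)\<^sup>*)"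
  unfolding gconnected_def gedges_def ..

lemma gedges_rtranclI: "x \<in> A \<Longrightarrow> y \<in> A \<Longrightarrow> x = y \<or> adjG x y \<Longrightarrow> (x, y) \<in> (gedges A)\<^sup>*"
  unfolding gedges_def by auto

lemma gconnected_transfer:
  assumes "gconnected A" and "B \<noteq> {}"
    and cover: "\<And>y. y \<in> B \<Longrightarrow> \<exists>x\<in>A. T x y"
    and same: "\<And>x y y'. x \<in> A \<Longrightarrow> y \<in> B \<Longrightarrow> y' \<in> B \<Longrightarrow> T x y \<Longrightarrow> T x y' \<Longrightarrow>
      (y, y') \<in> (gedges B)\<^sup>*"
    and follow: "\<And>x x' y. adjG x x' \<Longrightarrow> x \<in> A \<Longrightarrow> x' \<in> A \<Longrightarrow> y \<in> B \<Longrightarrow> T x y \<Longrightarrow>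
      \<exists>y'\<in>B. T x' y' \<and> (y, y') \<in> (gedges B)\<^sup>*"
  shows "gconnected B"
proof -
  have reach: "\<exists>y'\<in>B. T x' y' \<and> (y, y') \<in> (gedges B)\<^sup>*"
    if path: "(x, x') \<in> (gedges A)\<^sup>*" and "y \<in> B" "T x y" for x x' y
    using path
  proof (induction rule: rtrancl_induct)
    case base
    show ?case using \<open>y \<in> B\<close> \<open>T x y\<close> by blast
  next
    case (step x' x'')
    then obtain y' where "y' \<in> B" "T x' y'" "(y, y') \<in> (gedges B)\<^sup>*" by blast
    moreover have "adjG x' x''" "x' \<in> A" "x'' \<in> A" using step.hyps(2) by (auto simp: gedges_def)
    ultimately show ?case using follow by (meson rtrancl_trans)
  qed
  have "(y, y') \<in> (gedges B)\<^sup>*" if "y \<in> B" "y' \<in> B" for y y'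
  proof -
    obtain x x' where "x \<in> A" "T x y" "x' \<in> A" "T x' y'"
      using cover[OF \<open>y \<in> B\<close>] cover[OF \<open>y' \<in> B\<close>] by blast
    moreover have "(x, x') \<in> (gedges A)\<^sup>*"
      using \<open>gconnected A\<close> \<open>x \<in> A\<close> \<open>x' \<in> A\<close> by (simp add: gconnected_iff)
    ultimately obtain y'' where "y'' \<in> B" "T x' y''" "(y, y'') \<in> (gedges B)\<^sup>*"
      using reach \<open>y \<in> B\<close> by blast
    then show ?thesis using same \<open>x' \<in> A\<close> \<open>y' \<in> B\<close> \<open>T x' y'\<close> by (meson rtrancl_trans)
  qed
  then show ?thesis using \<open>B \<noteq> {}\<close> by (simp add: gconnected_iff)
qed

lemma gconnected_R:
  assumes "gconnected S" and "R S \<noteq> {}"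
  shows "gconnected (R S)"
proof (rule gconnected_transfer[where T = "\<lambda>u p. u \<in> Q p"])
  show "\<exists>u\<in>S. u \<in> Q p" if "p \<in> R S" for p
    using R_has_point that .
  show "(p, q) \<in> (gedges (R S))\<^sup>*" if "p \<in> R S" "q \<in> R S" "u \<in> Q p" "u \<in> Q q" for u p q
    using that by (simp add: gedges_rtranclI Q_common_point_eq_or_adjG)
  show "\<exists>q\<in>R S. u' \<in> Q q \<and> (p, q) \<in> (gedges (R S))\<^sup>*"
    if "adjG u u'" "u \<in> S" "u' \<in> S" "p \<in> R S" "u \<in> Q p" for u u' p
  proof -
    obtain z where z: "u \<in> Q z" "u' \<in> Q z" using adjG_common_Q \<open>adjG u u'\<close> by blast
    have "z \<in> R S" unfolding mem_R_iff using z that adjG_irrefl by blast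
    then show ?thesis using z that by (metis gedges_rtranclI Q_common_point_eq_or_adjG)
  qed
qed (use assms in auto)

lemma gconnected_S_Int_QS:
  assumes "E \<subseteq> R S" and "gconnected E"
  shows "gconnected (S \<inter> QS E)"
proof (rule gconnected_transfer[where T = "\<lambda>p u. u \<in> Q p"])
  obtain p where "p \<in> E" using \<open>gconnected E\<close> by (auto simp: gconnected_def)
  then show "S \<inter> QS E \<noteq> {}"
    using R_has_point assms(1) by (fastforce simp: QS_def)
  show "\<exists>p\<in>E. u \<in> Q p" if "u \<in> S \<inter> QS E" for u
    using that by (auto simp: QS_def)
  show "(u, v) \<in> (gedges (S \<inter> QS E))\<^sup>*" if "u \<in> S \<inter> QS E" "v \<in> S \<inter> QS E" "u \<in> Q p" "v \<in> Q p"
    for p u v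
    using that by (simp add: gedges_rtranclI Q_points_eq_or_adjG)
  show "\<exists>v\<in>S \<inter> QS E. v \<in> Q p' \<and> (u, v) \<in> (gedges (S \<inter> QS E))\<^sup>*"
    if "adjG p p'" and p: "p \<in> E" "p' \<in> E" and u: "u \<in> S \<inter> QS E" "u \<in> Q p" for p p' u
  proof -
    have "p \<in> R S" "p' \<in> R S" using p assms(1) by auto
    then obtain w w' where w: "w \<in> Q p" "w' \<in> Q p'" "w \<in> S" "w' \<in> S" "w = w' \<or> adjG w w'"
      using R_adjG_linked[OF _ _ \<open>adjG p p'\<close>] by blast
    then have ww': "w \<in> S \<inter> QS E" "w' \<in> S \<inter> QS E" using p by (auto simp: QS_def)
    have "(u, w) \<in> (gedges (S \<inter> QS E))\<^sup>*"
      using u(1) ww'(1) Q_points_eq_or_adjG[OF u(2) w(1)] by (rule gedges_rtranclI)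
    also have "(w, w') \<in> (gedges (S \<inter> QS E))\<^sup>*"
      using ww' w(5) by (rule gedges_rtranclI)
    finally show ?thesis using ww'(2) w(2) by (intro bexI[of _ w'] conjI)
  qed
qed (use assms in auto)

theorem fact3p1:
  fixes S :: "pt set"
  shows "(gconnected S \<longrightarrow> gconnected (R S) \<or> R S = {}) \<and>
         (\<forall>E. E \<subseteq> R S \<and> gconnected E \<longrightarrow> gconnected (S \<inter> QS E))"
  using gconnected_R gconnected_S_Int_QS by blast

end
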